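(* Let $X$ be a totally ordered set of distinct elements, let $k \ge 2$ and $1\le t\le k$ with $t \ne (k+1)/2$, and consider the $(k,t)$ scale which on input any $k$-element subset of $X$ returns its $t$-th smallest element. Let $S$ be the set of the $t-1$ smallest elements of $X$ and $L$ the set of the $k-t$ largest elements of $X$. Let $z_1,\ldots,z_{k+1}$ be $k+1$ fixed elements of $X$. Then by querying all $\binom{k+1}{k}$ $k$-element subsets of $\{z_1,\ldots,z_{k+1}\}$ one can find two of them, $x$ and $y$, such that $x,y \notin S\cup L$ and one knows that $x < y$.
   Context: The condition $t \neq (k+1)/2$ means the scale is asymmetric (not invariant under reversing the order). *)

theory Defs
  imports Main "HOL-Library.FuncSet"
begin

text \<open>A total order on X is given by a strict linear order relation r on X;
  (a,b) \<in> r means a < b.\<close>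

definition scale_answer :: "('a \<times> 'a) set \<Rightarrow> nat \<Rightarrow> 'a set \<Rightarrow> 'a" where
  "scale_answer r t A = (THE a. a \<in> A \<and> card {b \<in> A. (b, a) \<in> r} = t - 1)"

definition smallest_set :: "('a \<times> 'a) set \<Rightarrow> nat \<Rightarrow> 'a set \<Rightarrow> 'a set" where
  "smallest_set r t X = {a \<in> X. card {b \<in> X. (b, a) \<in> r} < t - 1}"

definition largest_set :: "('a \<times> 'a) set \<Rightarrow> nat \<Rightarrow> nat \<Rightarrow> 'a set \<Rightarrow> 'a set" where
  "largest_set r k t X = {a \<in> X. card {b \<in> X. (a, b) \<in> r} < k - t}"

end

theory Submission
  imports Defs
begin

text \<open>Let \<open>x\<close> and \<open>y\<close> be the elements of \<open>Z\<close> of rank \<open>t - 1\<close> and \<open>t\<close>. Removing an element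
  above \<open>x\<close> from \<open>Z\<close> leaves \<open>x\<close> as the \<open>t\<close>-th smallest, removing any other element makes
  \<open>y\<close> the \<open>t\<close>-th smallest. So among the \<open>k + 1\<close> queries \<open>x\<close> is returned exactly \<open>k + 1 - t\<close>
  times, \<open>y\<close> exactly \<open>t\<close> times and nothing else is returned; as \<open>t \<noteq> k + 1 - t\<close> the two
  answers can be told apart by their multiplicities. Having \<open>t - 1\<close> elements of \<open>Z\<close> below
  and at least \<open>k - t\<close> above, neither lies in \<open>S \<union> L\<close>.\<close>

definition rank :: "('a \<times> 'a) set \<Rightarrow> 'a set \<Rightarrow> 'a \<Rightarrow> nat" where
  "rank r A a = card {b \<in> A. (b, a) \<in> r}"

definition votes :: "('a set \<Rightarrow> 'a) \<Rightarrow> 'a set \<Rightarrow> 'a \<Rightarrow> nat" where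
  "votes ans Z v = card {w \<in> Z. ans (Z - {w}) = v}"

definition decode_votes :: "'a set \<Rightarrow> nat \<Rightarrow> ('a set \<Rightarrow> 'a) \<Rightarrow> 'a \<times> 'a" where
  "decode_votes Z t ans =
     (THE v. v \<in> Z \<and> votes ans Z v = card Z - t, THE v. v \<in> Z \<and> votes ans Z v = t)"

lemma rank_strict_mono:
  assumes "finite A" "a \<in> A" "(a, a') \<in> r" "trans r" "irrefl r"
  shows "rank r A a < rank r A a'"
proof -
  have "insert a {b \<in> A. (b, a) \<in> r} \<subseteq> {b \<in> A. (b, a') \<in> r}"
    using assms by (auto dest: transD)
  then have "card (insert a {b \<in> A. (b, a) \<in> r}) \<le> rank r A a'"
    unfolding rank_def using assms(1) by (intro card_mono) auto
  moreover have "card (insert a {b \<in> A. (b, a) \<in> r}) = Suc (rank r A a)"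
    unfolding rank_def using assms(1,5) by (simp add: irrefl_def)
  ultimately show ?thesis by simp
qed

lemma rank_mono_set:
  assumes "finite B" "A \<subseteq> B"
  shows "rank r A a \<le> rank r B a"
  unfolding rank_def using assms by (intro card_mono) auto

lemma rank_less_card:
  assumes "finite A" "a \<in> A" "irrefl r"
  shows "rank r A a < card A"
proof -
  have "{b \<in> A. (b, a) \<in> r} \<subset> A" using assms by (auto simp: irrefl_def)
  then show ?thesis unfolding rank_def using \<open>finite A\<close> by (simp add: psubset_card_mono)
qed

lemma rank_inj_on:
  assumes "finite A" "trans r" "irrefl r" "total_on A r"
  shows "inj_on (rank r A) A"
proof (rule inj_onI, rule ccontr)
  fix a a' assume "a \<in> A" "a' \<in> A" "rank r A a = rank r A a'" "a \<noteq> a'"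
  then have "(a, a') \<in> r \<or> (a', a) \<in> r" using \<open>total_on A r\<close> by (auto simp: total_on_def)
  then show False
    using rank_strict_mono[OF \<open>finite A\<close> _ _ \<open>trans r\<close> \<open>irrefl r\<close>] \<open>a \<in> A\<close> \<open>a' \<in> A\<close>
      \<open>rank r A a = rank r A a'\<close> by (metis less_irrefl)
qed

lemma rank_image:
  assumes "finite A" "trans r" "irrefl r" "total_on A r"
  shows "rank r A ` A = {..<card A}"
proof (rule card_subset_eq)
  show "rank r A ` A \<subseteq> {..<card A}" using rank_less_card assms by fastforce
  show "card (rank r A ` A) = card {..<card A}"
    using card_image[OF rank_inj_on[OF assms]] by simp
qed simp

lemma rank_converse:
  assumes "finite A" "trans r" "irrefl r" "total_on A r" "a \<in> A"
  shows "rank (r\<inverse>) A a = card A - 1 - rank r A a"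
proof -
  have "A - {a} = {b \<in> A. (b, a) \<in> r} \<union> {b \<in> A. (b, a) \<in> r\<inverse>}"
    using assms by (auto simp: total_on_def irrefl_def)
  moreover have "{b \<in> A. (b, a) \<in> r} \<inter> {b \<in> A. (b, a) \<in> r\<inverse>} = {}"
    using assms(2,3) by (auto simp: irrefl_def dest: transD)
  ultimately have "card (A - {a}) = rank r A a + rank (r\<inverse>) A a"
    unfolding rank_def using assms(1) by (simp add: card_Un_disjoint)
  then show ?thesis using assms(1,5) by simp
qed

lemma smallest_set_eq: "smallest_set r t X = {a \<in> X. rank r X a < t - 1}"
  by (simp add: smallest_set_def rank_def)

lemma largest_set_eq: "largest_set r k t X = {a \<in> X. rank (r\<inverse>) X a < k - t}"
  by (simp add: largest_set_def rank_def)

lemma scale_answer_eqI: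
  assumes "finite A" "trans r" "irrefl r" "total_on A r" "a \<in> A" "rank r A a = t - 1"
  shows "scale_answer r t A = a"
  unfolding scale_answer_def
proof (rule the_equality)
  show "a \<in> A \<and> card {b \<in> A. (b, a) \<in> r} = t - 1" using assms by (simp add: rank_def)
  fix a' assume "a' \<in> A \<and> card {b \<in> A. (b, a') \<in> r} = t - 1"
  then show "a' = a" using rank_inj_on[OF assms(1-4)] assms(5,6)
    by (auto simp: rank_def inj_on_def)
qed

locale ranked_pair =
  fixes r :: "('a \<times> 'a) set" and Z :: "'a set" and t :: nat and x y :: 'a
  assumes finite: "finite Z" and trans: "trans r" and irrefl: "irrefl r"
    and total: "total_on Z r"
    and x: "x \<in> Z" "rank r Z x = t - 1" and y: "y \<in> Z" "rank r Z y = t"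
    and t_pos: "1 \<le> t"
begin

lemma x_less_y: "(x, y) \<in> r"
proof -
  have "(y, x) \<notin> r"
    using rank_strict_mono[OF finite y(1) _ trans irrefl, of x] x(2) y(2) by linarith
  moreover have "x \<noteq> y" using x y t_pos by auto
  ultimately show ?thesis using total x y by (auto simp: total_on_def)
qed

lemma scale_answer_Diff_above:
  assumes "w \<in> Z" "(x, w) \<in> r"
  shows "scale_answer r t (Z - {w}) = x"
proof (rule scale_answer_eqI)
  have "{b \<in> Z - {w}. (b, x) \<in> r} = {b \<in> Z. (b, x) \<in> r}"
    using assms trans irrefl by (auto simp: irrefl_def dest: transD)
  then show "rank r (Z - {w}) x = t - 1" using x by (simp add: rank_def)
  show "x \<in> Z - {w}" using assms x irrefl by (auto simp: irrefl_def)
qed (use finite trans irrefl total in \<open>auto simp: total_on_def\<close>)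

lemma scale_answer_Diff_not_above:
  assumes "w \<in> Z" "(x, w) \<notin> r"
  shows "scale_answer r t (Z - {w}) = y"
proof (rule scale_answer_eqI)
  have "w = x \<or> (w, x) \<in> r" using assms total x by (auto simp: total_on_def)
  then have wy: "(w, y) \<in> r" using x_less_y trans by (auto dest: transD)
  have "{b \<in> Z - {w}. (b, y) \<in> r} = {b \<in> Z. (b, y) \<in> r} - {w}" by auto
  then have "rank r (Z - {w}) y = rank r Z y - 1"
    unfolding rank_def using assms(1) finite wy by (simp add: card_Diff_singleton)
  then show "rank r (Z - {w}) y = t - 1" using y by simp
  show "y \<in> Z - {w}" using wy y irrefl by (auto simp: irrefl_def)
qed (use finite trans irrefl total in \<open>auto simp: total_on_def\<close>)

lemma x_neq_y: "x \<noteq> y"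
  using x_less_y irrefl by (auto simp: irrefl_def)

lemma t_less_card: "t < card Z"
  using rank_less_card[OF finite y(1) irrefl] y by simp

lemma scale_answer_Diff_singleton:
  "w \<in> Z \<Longrightarrow> scale_answer r t (Z - {w}) = (if (x, w) \<in> r then x else y)"
  using scale_answer_Diff_above scale_answer_Diff_not_above by simp

lemma card_above_x: "card {w \<in> Z. (x, w) \<in> r} = card Z - t"
  using rank_converse[OF finite trans irrefl total x(1)] x t_pos by (simp add: rank_def)

lemma votes_scale_answer:
  "votes (scale_answer r t) Z v = (if v = x then card Z - t else if v = y then t else 0)"
proof -
  let ?above = "{w \<in> Z. (x, w) \<in> r}"
  have votes: "votes (scale_answer r t) Z v = card {w \<in> Z. (if (x, w) \<in> r then x else y) = v}"
    unfolding votes_def by (intro arg_cong[where f = card] Collect_cong)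
      (auto simp del: if_split simp: scale_answer_Diff_singleton)
  consider "v = x" | "v = y" | "v \<noteq> x" "v \<noteq> y" by blast
  then show ?thesis
  proof cases
    case 1
    then have "{w \<in> Z. (if (x, w) \<in> r then x else y) = v} = ?above"
      using x_neq_y by auto
    then show ?thesis using votes card_above_x 1 by simp
  next
    case 2
    then have "{w \<in> Z. (if (x, w) \<in> r then x else y) = v} = Z - ?above"
      using x_neq_y by auto
    moreover have "card (Z - ?above) = t"
      using card_above_x t_less_card finite by (simp add: card_Diff_subset)
    ultimately show ?thesis using votes 2 x_neq_y by simp
  next
    case 3
    then have "{w \<in> Z. (if (x, w) \<in> r then x else y) = v} = {}" by auto
    then show ?thesis using votes 3 by simp
  qed
qed

lemma decode_votes_scale_answer:
  assumes "2 * t \<noteq> card Z"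
  shows "decode_votes Z t (scale_answer r t) = (x, y)"
proof -
  have "card Z - t \<noteq> t" "card Z - t \<noteq> 0" "t \<noteq> 0"
    using assms t_pos t_less_card by auto
  then have "(THE v. v \<in> Z \<and> votes (scale_answer r t) Z v = card Z - t) = x"
    and "(THE v. v \<in> Z \<and> votes (scale_answer r t) Z v = t) = y"
    using x(1) y(1) x_neq_y by (auto simp only: votes_scale_answer intro: the_equality split: if_splits)
  then show ?thesis by (simp add: decode_votes_def)
qed

lemma ranked_pair_not_extreme:
  assumes "finite X" "Z \<subseteq> X" "v \<in> {x, y}"
  shows "v \<notin> smallest_set r t X \<union> largest_set r (card Z - 1) t X"
proof -
  have "t - 1 \<le> rank r Z v" "card Z - 1 - t \<le> rank (r\<inverse>) Z v"
    using assms(3) x y rank_converse[OF finite trans irrefl total] by auto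
  then have "t - 1 \<le> rank r X v" "card Z - 1 - t \<le> rank (r\<inverse>) X v"
    using rank_mono_set[OF assms(1,2)] order_trans by blast+
  then show ?thesis unfolding smallest_set_eq largest_set_eq by auto
qed

end

lemma votes_restrict:
  assumes "finite Z" "card Z = k + 1"
  shows "votes (restrict ans {A. A \<subseteq> Z \<and> card A = k}) Z = votes ans Z"
proof
  fix v
  have "{w \<in> Z. restrict ans {A. A \<subseteq> Z \<and> card A = k} (Z - {w}) = v} = {w \<in> Z. ans (Z - {w}) = v}"
    using assms by (auto simp: card_Diff_singleton)
  then show "votes (restrict ans {A. A \<subseteq> Z \<and> card A = k}) Z v = votes ans Z v"
    by (simp add: votes_def)
qed

lemma exists_ranked_pair:
  assumes "finite Z" "trans r" "irrefl r" "total_on Z r" "1 \<le> t" "t < card Z"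
  obtains x y where "ranked_pair r Z t x y"
proof -
  obtain x y where "x \<in> Z" "rank r Z x = t - 1" "y \<in> Z" "rank r Z y = t"
    using rank_image[OF assms(1-4)] assms(6) by (metis imageE lessThan_iff less_imp_diff_less)
  with assms have "ranked_pair r Z t x y" by unfold_locales
  then show ?thesis by (rule that)
qed

theorem lemma1:
  fixes X Z :: "'a set" and k t :: nat
  assumes "finite X" and "Z \<subseteq> X" and "card Z = k + 1"
    and "k \<ge> 2" and "1 \<le> t" and "t \<le> k" and "2 * t \<noteq> k + 1"
  shows "\<exists>f :: ('a set \<Rightarrow> 'a) \<Rightarrow> 'a \<times> 'a. \<forall>r. strict_linear_order_on X r \<longrightarrow>
    (let ans = restrict (scale_answer r t) {A. A \<subseteq> Z \<and> card A = k};
         x = fst (f ans); y = snd (f ans)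
     in x \<in> Z \<and> y \<in> Z \<and>
        x \<notin> smallest_set r t X \<union> largest_set r k t X \<and>
        y \<notin> smallest_set r t X \<union> largest_set r k t X \<and>
        (x, y) \<in> r)"
proof (intro exI[of _ "decode_votes Z t"] allI impI, goal_cases)
  case (1 r)
  then have order: "trans r" "irrefl r" "total_on Z r"
    using \<open>Z \<subseteq> X\<close> by (auto simp: strict_linear_order_on_def total_on_def)
  have "finite Z" "t < card Z" using assms(1-3,6) finite_subset by auto
  then obtain x y where "ranked_pair r Z t x y"
    using exists_ranked_pair order assms(5) by blast
  then interpret ranked_pair r Z t x y .
  have "decode_votes Z t (restrict (scale_answer r t) {A. A \<subseteq> Z \<and> card A = k}) = (x, y)"
    using decode_votes_scale_answer votes_restrict[OF finite assms(3)] assms(3,7)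
    by (simp add: decode_votes_def)
  moreover have "v \<notin> smallest_set r t X \<union> largest_set r k t X" if "v \<in> {x, y}" for v
    using ranked_pair_not_extreme[OF assms(1,2) that] assms(3) by simp
  ultimately show ?case using x(1) y(1) x_less_y by (simp add: Let_def)
qed

end
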